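(* Let $U$, $\widetilde U$ be groups, $\widetilde V\le \widetilde U$ a subgroup, and $I$ an index set. Let $\widetilde{\mathcal A}=\{\widetilde G_{ij},\widetilde\phi^i_{ij}\mid i\neq j\in I\}$ be a $\widetilde U$-amalgam over $I$ such that $\widetilde G_{ij}=\langle \widetilde\phi^i_{ij}(\widetilde U),\widetilde\phi^j_{ij}(\widetilde U)\rangle$ for all $i\ne j$, and let $\mathcal A=\{G_{ij},\phi^i_{ij}\mid i\neq j\in I\}$ be a $U$-amalgam over $I$. Let $\alpha=\{\pi,\rho^i,\alpha_{ij}\}:\widetilde{\mathcal A}\to\mathcal A$ be an epimorphism of amalgams, let $(\widetilde G,\{\widetilde\tau_{ij}\})$ and $(G,\{\tau_{ij}\})$ be universal enveloping groups of $\widetilde{\mathcal A}$ and $\mathcal A$, and let $\widehat\alpha:\widetilde G\to G$ be the unique epimorphism with $\widehat\alpha\circ\widetilde\tau_{ij}=\tau_{\pi(i)\pi(j)}\circ\alpha_{ij}$ for all $i\ne j$. For $i\neq j$ put $Z^i_{ij}:=\widetilde\phi^i_{ij}(\widetilde V)$, $Z_{ij}:=\langle Z^i_{ij},Z^j_{ij}\rangle$ and $A_{ij}:=\ker(\alpha_{ij})$. If $A_{ij}\le Z_{ij}\le Z(\widetilde G_{ij})$ for all $i\ne j$, then $N:=\langle \widetilde\tau_{ij}(A_{ij})\mid i\ne j\in I\rangle$ is contained in the centre of $\widetilde G$, $N=\ker\widehat\alpha$, and $\widetilde G/N\cong G$ via $\widehat\alpha$; i.e. $\widetilde G$ is a central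 extension of $G$ by $N$.
   Context: A $U$-amalgam over a set $I$ is a family $\{G_{ij},\phi^i_{ij}\mid i\ne j\in I\}$ of groups $G_{ij}$ (indexed by unordered pairs, $G_{ij}=G_{ji}$) and monomorphisms $\phi^i_{ij}:U\to G_{ij}$. An enveloping group of such an amalgam is a group $G$ with homomorphisms $\tau_{ij}:G_{ij}\to G$ such that $G$ is generated by the $\tau_{ij}(G_{ij})$ and $\tau_{ij}\circ\phi^j_{ij}=\tau_{kj}\circ\phi^j_{kj}$ for all pairwise distinct $i,j,k$; it is universal if for every enveloping group $(H,\{\tau'_{ij}\})$ there is a unique epimorphism $p:G\to H$ with $p\circ\tau_{ij}=\tau'_{ij}$ for all $i\ne j$. If $\widetilde{\mathcal A}$ is a $\widetilde U$-amalgam and $\mathcal A$ a $U$-amalgam over $I$, an epimorphism $\widetilde{\mathcal A}\to\mathcal A$ is a system $\{\pi,\rho^i,\alpha_{ij}\}$ consisting of a permutation $\pi$ of $I$, group epimorphisms $\rho^i:\widetilde U\to U$ and group epimorphisms $\alpha_{ij}:\widetilde G_{ij}\to G_{\pi(i)\pi(j)}$ with $\alpha_{ij}\circ\widetilde\phi^i_{ij}=\phi^{\pi(i)}_{\pi(i)\pi(j)}\circ\rho^{\pi(i)}$ for all $i\ne j$. *)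

theory Defs
  imports "HOL-Algebra.Algebra"
begin

definition group_center :: "('a, 'm) monoid_scheme \<Rightarrow> 'a set" where
  "group_center G = {z \<in> carrier G. \<forall>x \<in> carrier G. z \<otimes>\<^bsub>G\<^esub> x = x \<otimes>\<^bsub>G\<^esub> z}"

text \<open>A U-amalgam over I.  Gs i j is the group G_ij (required to equal Gs j i),
  phi i j is the monomorphism phi^i_ij : U \<rightarrow> G_ij (so phi j i is phi^j_ij).\<close>
definition U_amalgam ::
  "'u monoid \<Rightarrow> 'i set \<Rightarrow> ('i \<Rightarrow> 'i \<Rightarrow> 'g monoid) \<Rightarrow> ('i \<Rightarrow> 'i \<Rightarrow> 'u \<Rightarrow> 'g) \<Rightarrow> bool" where
  "U_amalgam U I Gs phi \<longleftrightarrow> group U \<and>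
     (\<forall>i\<in>I. \<forall>j\<in>I. i \<noteq> j \<longrightarrow>
        group (Gs i j) \<and> Gs i j = Gs j i \<and>
        phi i j \<in> hom U (Gs i j) \<and> inj_on (phi i j) (carrier U))"

definition enveloping_group ::
  "'u monoid \<Rightarrow> 'i set \<Rightarrow> ('i \<Rightarrow> 'i \<Rightarrow> 'g monoid) \<Rightarrow> ('i \<Rightarrow> 'i \<Rightarrow> 'u \<Rightarrow> 'g)
     \<Rightarrow> 'h monoid \<Rightarrow> ('i \<Rightarrow> 'i \<Rightarrow> 'g \<Rightarrow> 'h) \<Rightarrow> bool" where
  "enveloping_group U I Gs phi H tau \<longleftrightarrow> group H \<and>
     (\<forall>i\<in>I. \<forall>j\<in>I. i \<noteq> j \<longrightarrow>
        tau i j \<in> hom (Gs i j) H \<and> (\<forall>x \<in> carrier (Gs i j). tau i j x = tau j i x)) \<and>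
     generate H (\<Union>{tau i j ` carrier (Gs i j) | i j. i \<in> I \<and> j \<in> I \<and> i \<noteq> j}) = carrier H \<and>
     (\<forall>i\<in>I. \<forall>j\<in>I. \<forall>k\<in>I. i \<noteq> j \<and> j \<noteq> k \<and> i \<noteq> k \<longrightarrow>
        (\<forall>u \<in> carrier U. tau i j (phi j i u) = tau k j (phi j k u)))"

definition env_epi ::
  "'i set \<Rightarrow> ('i \<Rightarrow> 'i \<Rightarrow> 'g monoid) \<Rightarrow> 'e monoid \<Rightarrow> ('i \<Rightarrow> 'i \<Rightarrow> 'g \<Rightarrow> 'e)
     \<Rightarrow> 'h monoid \<Rightarrow> ('i \<Rightarrow> 'i \<Rightarrow> 'g \<Rightarrow> 'h) \<Rightarrow> ('e \<Rightarrow> 'h) \<Rightarrow> bool" where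
  "env_epi I Gs G tau H tau' p \<longleftrightarrow> p \<in> hom G H \<and> p ` carrier G = carrier H \<and>
     (\<forall>i\<in>I. \<forall>j\<in>I. i \<noteq> j \<longrightarrow> (\<forall>x \<in> carrier (Gs i j). p (tau i j x) = tau' i j x))"

text \<open>Universal enveloping group, where the universal property is quantified over
  all enveloping groups whose elements have type 'h (HOL cannot quantify over types
  inside a formula).\<close>
definition universal_enveloping ::
  "'h itself \<Rightarrow> 'u monoid \<Rightarrow> 'i set \<Rightarrow> ('i \<Rightarrow> 'i \<Rightarrow> 'g monoid) \<Rightarrow> ('i \<Rightarrow> 'i \<Rightarrow> 'u \<Rightarrow> 'g)
     \<Rightarrow> 'e monoid \<Rightarrow> ('i \<Rightarrow> 'i \<Rightarrow> 'g \<Rightarrow> 'e) \<Rightarrow> bool" where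
  "universal_enveloping (T :: 'h itself) U I Gs phi G tau \<longleftrightarrow>
     enveloping_group U I Gs phi G tau \<and>
     (\<forall>(H :: 'h monoid) tau'. enveloping_group U I Gs phi H tau' \<longrightarrow>
        (\<exists>p. env_epi I Gs G tau H tau' p) \<and>
        (\<forall>p q. env_epi I Gs G tau H tau' p \<and> env_epi I Gs G tau H tau' q \<longrightarrow>
                (\<forall>x \<in> carrier G. p x = q x)))"

definition amalgam_epi ::
  "'v monoid \<Rightarrow> ('i \<Rightarrow> 'i \<Rightarrow> 'gt monoid) \<Rightarrow> ('i \<Rightarrow> 'i \<Rightarrow> 'v \<Rightarrow> 'gt)
   \<Rightarrow> 'u monoid \<Rightarrow> ('i \<Rightarrow> 'i \<Rightarrow> 'g monoid) \<Rightarrow> ('i \<Rightarrow> 'i \<Rightarrow> 'u \<Rightarrow> 'g) \<Rightarrow> 'i set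
   \<Rightarrow> ('i \<Rightarrow> 'i) \<Rightarrow> ('i \<Rightarrow> 'v \<Rightarrow> 'u) \<Rightarrow> ('i \<Rightarrow> 'i \<Rightarrow> 'gt \<Rightarrow> 'g) \<Rightarrow> bool" where
  "amalgam_epi Ut Gt phit U Gs phi I \<pi> rho alpha \<longleftrightarrow>
     bij_betw \<pi> I I \<and>
     (\<forall>i\<in>I. rho i \<in> hom Ut U \<and> rho i ` carrier Ut = carrier U) \<and>
     (\<forall>i\<in>I. \<forall>j\<in>I. i \<noteq> j \<longrightarrow>
        alpha i j \<in> hom (Gt i j) (Gs (\<pi> i) (\<pi> j)) \<and>
        alpha i j ` carrier (Gt i j) = carrier (Gs (\<pi> i) (\<pi> j)) \<and>
        (\<forall>x \<in> carrier (Gt i j). alpha i j x = alpha j i x) \<and>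
        (\<forall>u \<in> carrier Ut. alpha i j (phit i j u) = phi (\<pi> i) (\<pi> j) (rho (\<pi> i) u)))"

end

theory Submission
  imports Defs
begin

(* Each kernel image taut_ij(A_ij) lies in taut_ij(Z_ij), which is generated by the point images
   taut_ij(phit^i_ij v), v in Vt.  A point image does not depend on the line ij through i, so it can
   be read off in every G_ik, where it is central; as G_ik is generated by its two point subgroups, the
   point image commutes with every generator of Gtil.  Hence N is central, in particular normal.
   Conversely, each tau_kl descends along the surjection alpha_ab (pi a = k, pi b = l) to a map into
   Gtil/N, because kernels of the alpha_ab land in N; this makes Gtil/N an enveloping group of the
   target amalgam.  Universality of G gives p : G -> Gtil/N with p o alphahat the quotient map, so
   ker alphahat <= N, and the first isomorphism theorem finishes the proof. *)

lemma (in group) subgroup_group_center: "subgroup (group_center G) G"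
proof
  show "group_center G \<subseteq> carrier G" "\<one> \<in> group_center G"
    by (auto simp: group_center_def)
next
  fix x y assume x: "x \<in> group_center G" and y: "y \<in> group_center G"
  have "x \<otimes> y \<otimes> z = z \<otimes> (x \<otimes> y)" if z: "z \<in> carrier G" for z
  proof -
    have xz: "x \<otimes> z = z \<otimes> x" and yz: "y \<otimes> z = z \<otimes> y" and c: "x \<in> carrier G" "y \<in> carrier G"
      using x y z by (auto simp: group_center_def)
    have "x \<otimes> y \<otimes> z = x \<otimes> (z \<otimes> y)" using c z yz by (simp add: m_assoc)
    also have "\<dots> = z \<otimes> (x \<otimes> y)" using c z xz by (simp flip: m_assoc)
    finally show ?thesis .
  qed
  with x y show "x \<otimes> y \<in> group_center G" unfolding group_center_def by blast
next
  fix x assume x: "x \<in> group_center G"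
  have "inv x \<otimes> z = z \<otimes> inv x" if z: "z \<in> carrier G" for z
  proof -
    have xz: "x \<otimes> z = z \<otimes> x" and c: "x \<in> carrier G"
      using x z by (auto simp: group_center_def)
    have "inv x \<otimes> z = inv x \<otimes> (z \<otimes> x) \<otimes> inv x" using c z by (simp add: m_assoc)
    also have "\<dots> = inv x \<otimes> (x \<otimes> z) \<otimes> inv x" by (simp add: xz)
    also have "\<dots> = z \<otimes> inv x" using c z by (simp flip: m_assoc)
    finally show ?thesis .
  qed
  with x show "inv x \<in> group_center G" unfolding group_center_def by blast
qed

lemma (in group) normal_if_central:
  assumes "subgroup N G" "N \<subseteq> group_center G" shows "N \<lhd> G"
  unfolding normal_inv_iff
proof (intro conjI ballI assms(1))
  fix x h assume x: "x \<in> carrier G" and h: "h \<in> N"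
  then have "h \<in> carrier G" and "h \<otimes> x = x \<otimes> h"
    using assms(2) by (auto simp: group_center_def)
  then have "x \<otimes> h \<otimes> inv x = h" using x by (simp add: m_assoc flip: \<open>h \<otimes> x = x \<otimes> h\<close>)
  with h show "x \<otimes> h \<otimes> inv x \<in> N" by simp
qed

lemma (in group) generate_commute:
  assumes z: "z \<in> carrier G" and S: "S \<subseteq> carrier G"
    and commute: "\<And>s. s \<in> S \<Longrightarrow> z \<otimes> s = s \<otimes> z" and x: "x \<in> generate G S"
  shows "z \<otimes> x = x \<otimes> z"
  using x
proof induction
  case (inv h)
  have h: "h \<in> carrier G" using S inv by blast
  have "z \<otimes> inv h = inv h \<otimes> (h \<otimes> z) \<otimes> inv h" using h z by (simp flip: m_assoc)
  also have "\<dots> = inv h \<otimes> z" using h z by (simp add: m_assoc flip: commute[OF inv])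
  finally show ?case .
next
  case (eng h1 h2)
  then have "h1 \<in> carrier G" "h2 \<in> carrier G" using generate_in_carrier[OF S] by auto
  then show ?case using eng z by (simp flip: m_assoc) (simp add: m_assoc)
qed (simp_all add: z commute)

lemma (in group) central_if_commutes_with_generators:
  assumes gen: "generate G S = carrier G" and S: "S \<subseteq> carrier G" and z: "z \<in> carrier G"
    and commute: "\<And>s. s \<in> S \<Longrightarrow> z \<otimes> s = s \<otimes> z"
  shows "z \<in> group_center G"
  using generate_commute[OF z S commute] z gen unfolding group_center_def by blast

lemma hom_eq_on_generate:
  assumes f: "group_hom G H f" and g: "group_hom G H g" and S: "S \<subseteq> carrier G"
    and agree: "\<And>s. s \<in> S \<Longrightarrow> f s = g s" and x: "x \<in> generate G S"
  shows "f x = g x"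
proof -
  interpret f: group_hom G H f by (fact f)
  interpret g: group_hom G H g by (fact g)
  from x show ?thesis
  proof induction
    case (inv h)
    then show ?case using S agree by auto
  next
    case (eng h1 h2)
    then show ?case using f.G.generate_in_carrier[OF S] by auto
  qed (simp_all add: agree)
qed

definition induced_hom :: "('a, 'm) monoid_scheme \<Rightarrow> ('a \<Rightarrow> 'b) \<Rightarrow> ('a \<Rightarrow> 'c) \<Rightarrow> 'b \<Rightarrow> 'c" where
  "induced_hom G f k y = k (SOME x. x \<in> carrier G \<and> f x = y)"

lemma induced_hom_apply:
  assumes f: "group_hom G H f" and k: "group_hom G K k"
    and ker: "kernel G H f \<subseteq> kernel G K k" and x: "x \<in> carrier G"
  shows "induced_hom G f k (f x) = k x"
proof -
  interpret f: group_hom G H f by (fact f)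
  interpret k: group_hom G K k by (fact k)
  define y where "y = (SOME y. y \<in> carrier G \<and> f y = f x)"
  have y: "y \<in> carrier G" "f y = f x"
    using someI[of "\<lambda>y. y \<in> carrier G \<and> f y = f x" x] x unfolding y_def by auto
  then have "y \<otimes>\<^bsub>G\<^esub> inv\<^bsub>G\<^esub> x \<in> kernel G H f" using x by (simp add: kernel_def)
  then have "k (y \<otimes>\<^bsub>G\<^esub> inv\<^bsub>G\<^esub> x) = \<one>\<^bsub>K\<^esub>" using ker by (auto simp: kernel_def)
  then have "k y = k x" using x y by (simp add: k.H.inv_solve_right')
  then show ?thesis unfolding induced_hom_def y_def .
qed

lemma induced_hom_hom:
  assumes f: "group_hom G H f" and k: "group_hom G K k" and onto: "f ` carrier G = carrier H"
    and ker: "kernel G H f \<subseteq> kernel G K k"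
  shows "induced_hom G f k \<in> hom H K"
proof -
  interpret f: group_hom G H f by (fact f)
  interpret k: group_hom G K k by (fact k)
  show ?thesis
  proof (rule homI)
    fix y assume "y \<in> carrier H"
    then obtain x where "x \<in> carrier G" "y = f x" using onto by blast
    then show "induced_hom G f k y \<in> carrier K" by (simp add: induced_hom_apply[OF f k ker])
  next
    fix y z assume "y \<in> carrier H" "z \<in> carrier H"
    then obtain x w where "x \<in> carrier G" "y = f x" "w \<in> carrier G" "z = f w" using onto by blast
    then show "induced_hom G f k (y \<otimes>\<^bsub>H\<^esub> z) = induced_hom G f k y \<otimes>\<^bsub>K\<^esub> induced_hom G f k z"
      by (simp add: induced_hom_apply[OF f k ker] flip: f.hom_mult)
  qed
qed

lemma (in group_hom) kernel_subset_if_quotient_factors: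
  assumes N: "N \<lhd> G" and p: "p \<in> hom H (G Mod N)"
    and factor: "\<And>x. x \<in> carrier G \<Longrightarrow> p (h x) = N #>\<^bsub>G\<^esub> x"
  shows "kernel G H h \<subseteq> N"
proof
  interpret N: normal N G by (fact N)
  fix x assume "x \<in> kernel G H h"
  then have x: "x \<in> carrier G" and "h x = \<one>\<^bsub>H\<^esub>" by (auto simp: kernel_def)
  then have "N #>\<^bsub>G\<^esub> x = \<one>\<^bsub>G Mod N\<^esub>"
    using factor[OF x] Group.hom_one[OF p H.is_group N.factorgroup_is_group] by simp
  then show "x \<in> N" using G.rcos_self[OF x N.subgroup_axioms] by simp
qed

locale amalgam_envelope =
  fixes U :: "'u monoid" and I :: "'i set" and Gs :: "'i \<Rightarrow> 'i \<Rightarrow> 'g monoid"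
    and phi :: "'i \<Rightarrow> 'i \<Rightarrow> 'u \<Rightarrow> 'g" and H :: "'h monoid" and tau :: "'i \<Rightarrow> 'i \<Rightarrow> 'g \<Rightarrow> 'h"
  assumes amalgam: "U_amalgam U I Gs phi"
    and envelope: "enveloping_group U I Gs phi H tau"
begin

lemma group_H: "group H"
  using envelope unfolding enveloping_group_def by blast

sublocale H: group H by (fact group_H)

context
  fixes i j assumes i: "i \<in> I" and j: "j \<in> I" and ij: "i \<noteq> j"
begin

lemma group_Gs: "group (Gs i j)"
  and Gs_sym: "Gs i j = Gs j i"
  and phi_hom: "phi i j \<in> hom U (Gs i j)"
  using amalgam i j ij by (simp_all add: U_amalgam_def)

lemma tau_group_hom: "group_hom (Gs i j) H (tau i j)"
proof -
  have "tau i j \<in> hom (Gs i j) H" using envelope i j ij by (simp add: enveloping_group_def)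
  then show ?thesis using group_Gs group_H by (simp add: group_hom_def group_hom_axioms_def)
qed

lemma tau_sym: "x \<in> carrier (Gs i j) \<Longrightarrow> tau i j x = tau j i x"
proof -
  have "\<forall>i\<in>I. \<forall>j\<in>I. i \<noteq> j \<longrightarrow>
      tau i j \<in> hom (Gs i j) H \<and> (\<forall>x \<in> carrier (Gs i j). tau i j x = tau j i x)"
    using envelope unfolding enveloping_group_def by (elim conjE)
  with i j ij show "x \<in> carrier (Gs i j) \<Longrightarrow> tau i j x = tau j i x" by blast
qed

end

lemma phi_in_carrier:
  "i \<in> I \<Longrightarrow> j \<in> I \<Longrightarrow> i \<noteq> j \<Longrightarrow> u \<in> carrier U \<Longrightarrow> phi i j u \<in> carrier (Gs i j)"
  using hom_in_carrier[OF phi_hom] .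

lemma phi_in_carrier':
  "i \<in> I \<Longrightarrow> j \<in> I \<Longrightarrow> i \<noteq> j \<Longrightarrow> u \<in> carrier U \<Longrightarrow> phi j i u \<in> carrier (Gs i j)"
  using phi_in_carrier[of j i u] Gs_sym by simp

lemma tau_in_carrier:
  "i \<in> I \<Longrightarrow> j \<in> I \<Longrightarrow> i \<noteq> j \<Longrightarrow> x \<in> carrier (Gs i j) \<Longrightarrow> tau i j x \<in> carrier H"
  using group_hom.hom_closed[OF tau_group_hom] .

abbreviation generators :: "'h set" where
  "generators \<equiv> \<Union>{tau i j ` carrier (Gs i j) | i j. i \<in> I \<and> j \<in> I \<and> i \<noteq> j}"

lemma generators_subset: "generators \<subseteq> carrier H"
proof
  fix s assume "s \<in> generators"
  then obtain i j x where "i \<in> I" "j \<in> I" "i \<noteq> j" "x \<in> carrier (Gs i j)" "s = tau i j x"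
    by blast
  then show "s \<in> carrier H" using tau_in_carrier by simp
qed

lemma generate_generators: "generate H generators = carrier H"
  using envelope unfolding enveloping_group_def by blast

lemma tau_phi_relation:
  assumes "i \<in> I" "j \<in> I" "k \<in> I" "i \<noteq> j" "j \<noteq> k" "i \<noteq> k" "u \<in> carrier U"
  shows "tau i j (phi j i u) = tau k j (phi j k u)"
proof -
  have "\<forall>i\<in>I. \<forall>j\<in>I. \<forall>k\<in>I. i \<noteq> j \<and> j \<noteq> k \<and> i \<noteq> k \<longrightarrow>
      (\<forall>u \<in> carrier U. tau i j (phi j i u) = tau k j (phi j k u))"
    using envelope unfolding enveloping_group_def by (elim conjE)
  with assms show ?thesis by blast
qed

lemma tau_phi_indep:
  assumes i: "i \<in> I" and j: "j \<in> I" and k: "k \<in> I" and "i \<noteq> j" "i \<noteq> k"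
    and u: "u \<in> carrier U"
  shows "tau i j (phi i j u) = tau i k (phi i k u)"
proof (cases "j = k")
  case False
  have "tau i j (phi i j u) = tau j i (phi i j u)"
    using tau_sym[OF i j] phi_in_carrier[OF i j] assms by simp
  also have "\<dots> = tau k i (phi i k u)"
    using tau_phi_relation[OF j i k] assms False by simp
  also have "\<dots> = tau i k (phi i k u)"
    using tau_sym[OF k i] phi_in_carrier'[OF k i] assms by simp
  finally show ?thesis .
qed simp

lemma tau_phi_commute:
  assumes i: "i \<in> I" and j: "j \<in> I" and ij: "i \<noteq> j" and v: "v \<in> carrier U"
    and central: "\<And>m. m \<in> I \<Longrightarrow> m \<noteq> i \<Longrightarrow> phi i m v \<in> group_center (Gs i m)"
    and k: "k \<in> I" and l: "l \<in> I" and kl: "k \<noteq> l" and u: "u \<in> carrier U"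
  shows "tau i j (phi i j v) \<otimes>\<^bsub>H\<^esub> tau k l (phi k l u) = tau k l (phi k l u) \<otimes>\<^bsub>H\<^esub> tau i j (phi i j v)"
proof -
  txt \<open>Both factors are images under one tau i m: the right one sits at the point k, which lies
    on the line i m.\<close>
  define m where "m = (if k = i then l else k)"
  have m: "m \<in> I" "i \<noteq> m" using k l kl by (auto simp: m_def)
  obtain y where y: "y \<in> carrier (Gs i m)" and tau_u: "tau k l (phi k l u) = tau i m y"
  proof (cases "k = i")
    case True
    then show thesis using that[of "phi i m u"] phi_in_carrier[OF i m u] by (simp add: m_def)
  next
    case False
    have "tau k l (phi k l u) = tau k i (phi k i u)"
      using tau_phi_indep[OF k l i kl _ u] False by simp
    also have "\<dots> = tau i k (phi k i u)"
      using tau_sym[OF k i] phi_in_carrier[OF k i _ u] False by simp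
    finally show thesis using that[of "phi k i u"] phi_in_carrier'[OF i k _ u] False
      by (simp add: m_def)
  qed
  have "phi i m v \<in> group_center (Gs i m)" using central m by simp
  then have "phi i m v \<otimes>\<^bsub>Gs i m\<^esub> y = y \<otimes>\<^bsub>Gs i m\<^esub> phi i m v" "phi i m v \<in> carrier (Gs i m)"
    using y by (auto simp: group_center_def)
  then have "tau i m (phi i m v) \<otimes>\<^bsub>H\<^esub> tau i m y = tau i m y \<otimes>\<^bsub>H\<^esub> tau i m (phi i m v)"
    using y by (simp flip: group_hom.hom_mult[OF tau_group_hom[OF i m]])
  then show ?thesis using tau_phi_indep[OF i j m(1) ij m(2) v] tau_u by simp
qed

lemma tau_phi_central:
  assumes gen: "\<And>k l. k \<in> I \<Longrightarrow> l \<in> I \<Longrightarrow> k \<noteq> l \<Longrightarrow>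
      carrier (Gs k l) = generate (Gs k l) (phi k l ` carrier U \<union> phi l k ` carrier U)"
    and i: "i \<in> I" and j: "j \<in> I" and ij: "i \<noteq> j" and v: "v \<in> carrier U"
    and central: "\<And>m. m \<in> I \<Longrightarrow> m \<noteq> i \<Longrightarrow> phi i m v \<in> group_center (Gs i m)"
  shows "tau i j (phi i j v) \<in> group_center H"
proof (rule H.central_if_commutes_with_generators[OF generate_generators generators_subset])
  let ?c = "tau i j (phi i j v)"
  show c: "?c \<in> carrier H" using tau_in_carrier[OF i j ij] phi_in_carrier[OF i j ij v] .
  fix s assume "s \<in> generators"
  then obtain k l y where k: "k \<in> I" and l: "l \<in> I" and kl: "k \<noteq> l"
    and y: "y \<in> carrier (Gs k l)" and s: "s = tau k l y"
    by blast
  let ?T = "phi k l ` carrier U \<union> phi l k ` carrier U"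
  have T: "?T \<subseteq> carrier (Gs k l)" using phi_in_carrier[OF k l kl] phi_in_carrier'[OF k l kl] by auto
  have "tau k l ` ?T \<subseteq> carrier H" using T tau_in_carrier[OF k l kl] by auto
  moreover have "?c \<otimes>\<^bsub>H\<^esub> t = t \<otimes>\<^bsub>H\<^esub> ?c" if "t \<in> tau k l ` ?T" for t
  proof -
    obtain u where u: "u \<in> carrier U" and "t = tau k l (phi k l u) \<or> t = tau l k (phi l k u)"
      using \<open>t \<in> tau k l ` ?T\<close> tau_sym[OF k l kl] phi_in_carrier'[OF k l kl] by blast
    then show ?thesis
      using tau_phi_commute[OF i j ij v central] k l kl by blast
  qed
  moreover have "s \<in> generate H (tau k l ` ?T)"
    using y gen[OF k l kl] group_hom.generate_img[OF tau_group_hom[OF k l kl] T] s by simp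
  ultimately show "?c \<otimes>\<^bsub>H\<^esub> s = s \<otimes>\<^bsub>H\<^esub> ?c" by (rule H.generate_commute[OF c])
qed

lemma tau_image_central:
  assumes gen: "\<And>k l. k \<in> I \<Longrightarrow> l \<in> I \<Longrightarrow> k \<noteq> l \<Longrightarrow>
      carrier (Gs k l) = generate (Gs k l) (phi k l ` carrier U \<union> phi l k ` carrier U)"
    and V: "V \<subseteq> carrier U"
    and central: "\<And>k l. k \<in> I \<Longrightarrow> l \<in> I \<Longrightarrow> k \<noteq> l \<Longrightarrow>
      generate (Gs k l) (phi k l ` V \<union> phi l k ` V) \<subseteq> group_center (Gs k l)"
    and i: "i \<in> I" and j: "j \<in> I" and ij: "i \<noteq> j"
  shows "tau i j ` generate (Gs i j) (phi i j ` V \<union> phi j i ` V) \<subseteq> group_center H"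
proof -
  let ?T = "phi i j ` V \<union> phi j i ` V"
  have point_central: "tau a b (phi a b v) \<in> group_center H"
    if "a \<in> I" "b \<in> I" "a \<noteq> b" "v \<in> V" for a b v
  proof (rule tau_phi_central[OF gen that(1-3)])
    show "v \<in> carrier U" using V that(4) by blast
    fix m assume "m \<in> I" "m \<noteq> a"
    then show "phi a m v \<in> group_center (Gs a m)"
      using central[of a m] generate.incl[of "phi a m v" "phi a m ` V \<union> phi m a ` V"] that by blast
  qed
  have T: "?T \<subseteq> carrier (Gs i j)" using V phi_in_carrier[OF i j ij] phi_in_carrier'[OF i j ij] by auto
  have "tau i j ` ?T \<subseteq> group_center H"
    using point_central[OF i j ij] point_central[OF j i ij[symmetric]] V tau_sym[OF i j ij]
      phi_in_carrier'[OF i j ij] by auto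
  then have "generate H (tau i j ` ?T) \<subseteq> group_center H"
    by (rule H.generate_subgroup_incl[OF _ H.subgroup_group_center])
  then show ?thesis using group_hom.generate_img[OF tau_group_hom[OF i j ij] T] by simp
qed

end

locale amalgam_epimorphism = amalgam_envelope Ut I Gt phit Gtil taut
  for Ut :: "'v monoid" and I :: "'i set" and Gt :: "'i \<Rightarrow> 'i \<Rightarrow> 'gt monoid"
    and phit :: "'i \<Rightarrow> 'i \<Rightarrow> 'v \<Rightarrow> 'gt" and Gtil :: "'et monoid" and taut :: "'i \<Rightarrow> 'i \<Rightarrow> 'gt \<Rightarrow> 'et" +
  fixes U :: "'u monoid" and Gs :: "'i \<Rightarrow> 'i \<Rightarrow> 'g monoid" and phi :: "'i \<Rightarrow> 'i \<Rightarrow> 'u \<Rightarrow> 'g"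
    and \<pi> :: "'i \<Rightarrow> 'i" and rho :: "'i \<Rightarrow> 'v \<Rightarrow> 'u" and alpha :: "'i \<Rightarrow> 'i \<Rightarrow> 'gt \<Rightarrow> 'g"
  assumes target: "U_amalgam U I Gs phi"
    and epi: "amalgam_epi Ut Gt phit U Gs phi I \<pi> rho alpha"
begin

lemma pi_bij: "bij_betw \<pi> I I"
  using epi by (simp add: amalgam_epi_def)

lemma pi_in: "a \<in> I \<Longrightarrow> \<pi> a \<in> I"
  using bij_betw_apply[OF pi_bij] .

lemma pi_neq: "a \<in> I \<Longrightarrow> b \<in> I \<Longrightarrow> a \<noteq> b \<Longrightarrow> \<pi> a \<noteq> \<pi> b"
  using bij_betw_imp_inj_on[OF pi_bij] by (auto dest: inj_onD)

lemma pi_preimage: "k \<in> I \<Longrightarrow> inv_into I \<pi> k \<in> I \<and> \<pi> (inv_into I \<pi> k) = k"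
  using bij_betw_inv_into_left[OF pi_bij] bij_betw_imp_surj_on[OF pi_bij] inv_into_into f_inv_into_f
  by metis

lemma rho_onto: "a \<in> I \<Longrightarrow> rho a ` carrier Ut = carrier U"
  using epi by (simp add: amalgam_epi_def)

context
  fixes a b assumes a: "a \<in> I" and b: "b \<in> I" and ab: "a \<noteq> b"
begin

lemma amalgam_epi_at:
  "alpha a b \<in> hom (Gt a b) (Gs (\<pi> a) (\<pi> b)) \<and>
   alpha a b ` carrier (Gt a b) = carrier (Gs (\<pi> a) (\<pi> b)) \<and>
   (\<forall>x \<in> carrier (Gt a b). alpha a b x = alpha b a x) \<and>
   (\<forall>u \<in> carrier Ut. alpha a b (phit a b u) = phi (\<pi> a) (\<pi> b) (rho (\<pi> a) u))"
proof -
  have "\<forall>i\<in>I. \<forall>j\<in>I. i \<noteq> j \<longrightarrow>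
      alpha i j \<in> hom (Gt i j) (Gs (\<pi> i) (\<pi> j)) \<and>
      alpha i j ` carrier (Gt i j) = carrier (Gs (\<pi> i) (\<pi> j)) \<and>
      (\<forall>x \<in> carrier (Gt i j). alpha i j x = alpha j i x) \<and>
      (\<forall>u \<in> carrier Ut. alpha i j (phit i j u) = phi (\<pi> i) (\<pi> j) (rho (\<pi> i) u))"
    using epi unfolding amalgam_epi_def by (elim conjE)
  with a b ab show ?thesis by blast
qed

lemma alpha_group_hom: "group_hom (Gt a b) (Gs (\<pi> a) (\<pi> b)) (alpha a b)"
  using amalgam_epi_at group_Gs[OF a b ab] target pi_in[OF a] pi_in[OF b] pi_neq[OF a b ab]
  by (simp add: group_hom_def group_hom_axioms_def U_amalgam_def)

lemma alpha_onto: "alpha a b ` carrier (Gt a b) = carrier (Gs (\<pi> a) (\<pi> b))"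
  using amalgam_epi_at by blast

lemma alpha_sym: "x \<in> carrier (Gt a b) \<Longrightarrow> alpha a b x = alpha b a x"
  using amalgam_epi_at by blast

lemma alpha_phit: "u \<in> carrier Ut \<Longrightarrow> alpha a b (phit a b u) = phi (\<pi> a) (\<pi> b) (rho (\<pi> a) u)"
  using amalgam_epi_at by blast

end

(* tau'_kl: the coset of taut_ab, transported along the surjection alpha_ab, where pi a = k, pi b = l *)
definition quotient_tau :: "'et set \<Rightarrow> 'i \<Rightarrow> 'i \<Rightarrow> 'g \<Rightarrow> 'et set" where
  "quotient_tau N k l =
    (let a = inv_into I \<pi> k; b = inv_into I \<pi> l
     in induced_hom (Gt a b) (alpha a b) (\<lambda>x. N #>\<^bsub>Gtil\<^esub> taut a b x))"

context
  fixes N assumes N: "N \<lhd> Gtil"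
    and kernels: "\<And>a b. a \<in> I \<Longrightarrow> b \<in> I \<Longrightarrow> a \<noteq> b \<Longrightarrow>
      taut a b ` kernel (Gt a b) (Gs (\<pi> a) (\<pi> b)) (alpha a b) \<subseteq> N"
begin

interpretation N: normal N Gtil by (fact N)

context
  fixes a b assumes a: "a \<in> I" and b: "b \<in> I" and ab: "a \<noteq> b"
begin

lemma coset_taut_group_hom: "group_hom (Gt a b) (Gtil Mod N) (\<lambda>x. N #>\<^bsub>Gtil\<^esub> taut a b x)"
proof -
  have "(\<lambda>z. N #>\<^bsub>Gtil\<^esub> z) \<circ> taut a b \<in> hom (Gt a b) (Gtil Mod N)"
    using hom_compose[OF group_hom.homh[OF tau_group_hom[OF a b ab]] N.r_coset_hom_Mod] .
  then show ?thesis
    using group_Gs[OF a b ab] N.factorgroup_is_group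
    by (simp add: group_hom_def group_hom_axioms_def comp_def)
qed

lemma kernel_alpha_subset:
  "kernel (Gt a b) (Gs (\<pi> a) (\<pi> b)) (alpha a b)
     \<subseteq> kernel (Gt a b) (Gtil Mod N) (\<lambda>x. N #>\<^bsub>Gtil\<^esub> taut a b x)"
proof
  fix x assume x: "x \<in> kernel (Gt a b) (Gs (\<pi> a) (\<pi> b)) (alpha a b)"
  then have "x \<in> carrier (Gt a b)" "taut a b x \<in> N" using kernels[OF a b ab] by (auto simp: kernel_def)
  then show "x \<in> kernel (Gt a b) (Gtil Mod N) (\<lambda>x. N #>\<^bsub>Gtil\<^esub> taut a b x)"
    using H.coset_join2[OF tau_in_carrier[OF a b ab] N.subgroup_axioms] by (simp add: kernel_def)
qed

lemma quotient_tau_alpha: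
  "x \<in> carrier (Gt a b) \<Longrightarrow> quotient_tau N (\<pi> a) (\<pi> b) (alpha a b x) = N #>\<^bsub>Gtil\<^esub> taut a b x"
  unfolding quotient_tau_def Let_def bij_betw_inv_into_left[OF pi_bij a] bij_betw_inv_into_left[OF pi_bij b]
  by (rule induced_hom_apply[OF alpha_group_hom[OF a b ab] coset_taut_group_hom kernel_alpha_subset])

lemma quotient_tau_hom_pi: "quotient_tau N (\<pi> a) (\<pi> b) \<in> hom (Gs (\<pi> a) (\<pi> b)) (Gtil Mod N)"
  unfolding quotient_tau_def Let_def bij_betw_inv_into_left[OF pi_bij a] bij_betw_inv_into_left[OF pi_bij b]
  by (rule induced_hom_hom[OF alpha_group_hom[OF a b ab] coset_taut_group_hom alpha_onto[OF a b ab]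
        kernel_alpha_subset])

lemma quotient_tau_phi:
  "w \<in> carrier Ut \<Longrightarrow>
    quotient_tau N (\<pi> a) (\<pi> b) (phi (\<pi> b) (\<pi> a) (rho (\<pi> b) w)) = N #>\<^bsub>Gtil\<^esub> taut a b (phit b a w)"
  using alpha_phit[OF b a ab[symmetric]] alpha_sym[OF a b ab] phi_in_carrier'[OF a b ab]
    quotient_tau_alpha[OF phi_in_carrier'[OF a b ab]] by simp

end

lemma quotient_tau_hom: "k \<in> I \<Longrightarrow> l \<in> I \<Longrightarrow> k \<noteq> l \<Longrightarrow> quotient_tau N k l \<in> hom (Gs k l) (Gtil Mod N)"
  using quotient_tau_hom_pi pi_preimage by metis

lemma quotient_tau_sym:
  assumes k: "k \<in> I" and l: "l \<in> I" and kl: "k \<noteq> l" and g: "g \<in> carrier (Gs k l)"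
  shows "quotient_tau N k l g = quotient_tau N l k g"
proof -
  obtain a b where a: "a \<in> I" "k = \<pi> a" and b: "b \<in> I" "l = \<pi> b" using pi_preimage k l by metis
  then have ab: "a \<noteq> b" using kl by blast
  obtain x where x: "x \<in> carrier (Gt a b)" and g: "g = alpha a b x"
    using g alpha_onto[OF a(1) b(1) ab] a b by blast
  have "quotient_tau N k l g = N #>\<^bsub>Gtil\<^esub> taut a b x"
    using quotient_tau_alpha[OF a(1) b(1) ab x] a b g by simp
  also have "\<dots> = N #>\<^bsub>Gtil\<^esub> taut b a x" using tau_sym[OF a(1) b(1) ab x] by simp
  also have "\<dots> = quotient_tau N l k g"
    using quotient_tau_alpha[OF b(1) a(1) ab[symmetric]] alpha_sym[OF a(1) b(1) ab x] x Gs_sym[OF a(1) b(1) ab]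
      a b g by simp
  finally show ?thesis .
qed

lemma quotient_tau_relation:
  assumes i: "i \<in> I" and j: "j \<in> I" and k: "k \<in> I" and "i \<noteq> j" "j \<noteq> k" "i \<noteq> k"
    and u: "u \<in> carrier U"
  shows "quotient_tau N i j (phi j i u) = quotient_tau N k j (phi j k u)"
proof -
  obtain a b c where a: "a \<in> I" "i = \<pi> a" and b: "b \<in> I" "j = \<pi> b" and c: "c \<in> I" "k = \<pi> c"
    using pi_preimage i j k by metis
  then have "a \<noteq> b" "b \<noteq> c" "a \<noteq> c" using assms by auto
  obtain w where w: "w \<in> carrier Ut" "u = rho j w" using u rho_onto[OF j] by blast
  have "quotient_tau N i j (phi j i u) = N #>\<^bsub>Gtil\<^esub> taut a b (phit b a w)"
    using quotient_tau_phi[OF a(1) b(1) \<open>a \<noteq> b\<close> w(1)] a b w by simp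
  also have "\<dots> = N #>\<^bsub>Gtil\<^esub> taut c b (phit b c w)"
    using tau_phi_relation[OF a(1) b(1) c(1) \<open>a \<noteq> b\<close> \<open>b \<noteq> c\<close> \<open>a \<noteq> c\<close> w(1)] by simp
  also have "\<dots> = quotient_tau N k j (phi j k u)"
    using quotient_tau_phi[OF c(1) b(1) \<open>b \<noteq> c\<close>[symmetric] w(1)] b c w by simp
  finally show ?thesis .
qed

lemma quotient_generate:
  "generate (Gtil Mod N) (\<Union>{quotient_tau N k l ` carrier (Gs k l) | k l. k \<in> I \<and> l \<in> I \<and> k \<noteq> l})
    = carrier (Gtil Mod N)" (is "generate _ ?S = _")
proof
  interpret Q: group "Gtil Mod N" by (rule N.factorgroup_is_group)
  have S: "?S \<subseteq> carrier (Gtil Mod N)" using hom_in_carrier[OF quotient_tau_hom] by blast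
  then show "generate (Gtil Mod N) ?S \<subseteq> carrier (Gtil Mod N)" by (rule Q.generate_incl)
  have "(\<lambda>z. N #>\<^bsub>Gtil\<^esub> z) ` generators \<subseteq> ?S"
  proof
    fix t assume "t \<in> (\<lambda>z. N #>\<^bsub>Gtil\<^esub> z) ` generators"
    then obtain a b x where a: "a \<in> I" and b: "b \<in> I" and ab: "a \<noteq> b" and x: "x \<in> carrier (Gt a b)"
      and t: "t = N #>\<^bsub>Gtil\<^esub> taut a b x"
      by blast
    then have "t = quotient_tau N (\<pi> a) (\<pi> b) (alpha a b x)" using quotient_tau_alpha by simp
    then show "t \<in> ?S"
      using alpha_onto[OF a b ab] x pi_in[OF a] pi_in[OF b] pi_neq[OF a b ab] by blast
  qed
  moreover have "carrier (Gtil Mod N) = generate (Gtil Mod N) ((\<lambda>z. N #>\<^bsub>Gtil\<^esub> z) ` generators)"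
    using group_hom.generate_img[OF _ generators_subset, of "Gtil Mod N"] N.r_coset_hom_Mod
      generate_generators carrier_FactGroup[of Gtil N]
    by (simp add: group_hom_def group_hom_axioms_def)
  ultimately show "carrier (Gtil Mod N) \<subseteq> generate (Gtil Mod N) ?S"
    using Q.mono_generate by blast
qed

lemma quotient_enveloping: "enveloping_group U I Gs phi (Gtil Mod N) (quotient_tau N)"
  unfolding enveloping_group_def
  using N.factorgroup_is_group quotient_tau_hom quotient_tau_sym quotient_generate quotient_tau_relation
  by blast

lemma kernel_subset_normal:
  assumes univ: "universal_enveloping TYPE('et set) U I Gs phi G tau"
    and alphahat: "group_hom Gtil G alphahat"
    and alphahat_tau: "\<And>a b x. a \<in> I \<Longrightarrow> b \<in> I \<Longrightarrow> a \<noteq> b \<Longrightarrow> x \<in> carrier (Gt a b) \<Longrightarrow>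
      alphahat (taut a b x) = tau (\<pi> a) (\<pi> b) (alpha a b x)"
  shows "kernel Gtil G alphahat \<subseteq> N"
proof -
  obtain p where p: "env_epi I Gs G tau (Gtil Mod N) (quotient_tau N) p"
    using univ quotient_enveloping unfolding universal_enveloping_def by blast
  have p_hom: "group_hom G (Gtil Mod N) p"
    using p alphahat N.factorgroup_is_group
    by (simp add: env_epi_def group_hom_def group_hom_axioms_def)
  have quotient_map: "group_hom Gtil (Gtil Mod N) (\<lambda>z. N #>\<^bsub>Gtil\<^esub> z)"
    using N.r_coset_hom_Mod N.factorgroup_is_group group_H
    by (simp add: group_hom_def group_hom_axioms_def)
  have "p \<circ> alphahat \<in> hom Gtil (Gtil Mod N)"
    using hom_compose[OF group_hom.homh[OF alphahat] group_hom.homh[OF p_hom]] .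
  then have composite: "group_hom Gtil (Gtil Mod N) (p \<circ> alphahat)"
    using N.factorgroup_is_group group_H by (simp add: group_hom_def group_hom_axioms_def)
  have "(p \<circ> alphahat) s = N #>\<^bsub>Gtil\<^esub> s" if "s \<in> generators" for s
  proof -
    obtain a b x where a: "a \<in> I" and b: "b \<in> I" and ab: "a \<noteq> b" and x: "x \<in> carrier (Gt a b)"
      and s: "s = taut a b x"
      using \<open>s \<in> generators\<close> by blast
    have "alpha a b x \<in> carrier (Gs (\<pi> a) (\<pi> b))" using alpha_onto[OF a b ab] x by blast
    then have "p (tau (\<pi> a) (\<pi> b) (alpha a b x)) = quotient_tau N (\<pi> a) (\<pi> b) (alpha a b x)"
      using p pi_in[OF a] pi_in[OF b] pi_neq[OF a b ab] unfolding env_epi_def by blast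
    then show ?thesis using alphahat_tau[OF a b ab x] quotient_tau_alpha[OF a b ab x] s by simp
  qed
  then have "(p \<circ> alphahat) z = N #>\<^bsub>Gtil\<^esub> z" if "z \<in> carrier Gtil" for z
    using hom_eq_on_generate[OF composite quotient_map generators_subset] generate_generators that
    by blast
  then show ?thesis
    using group_hom.kernel_subset_if_quotient_factors[OF alphahat N group_hom.homh[OF p_hom]] by simp
qed

end

abbreviation kernel_images :: "'et set" where
  "kernel_images \<equiv>
    \<Union>{taut a b ` kernel (Gt a b) (Gs (\<pi> a) (\<pi> b)) (alpha a b) | a b. a \<in> I \<and> b \<in> I \<and> a \<noteq> b}"

lemma generate_kernel_images_central:
  assumes gen: "\<And>a b. a \<in> I \<Longrightarrow> b \<in> I \<Longrightarrow> a \<noteq> b \<Longrightarrow>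
      carrier (Gt a b) = generate (Gt a b) (phit a b ` carrier Ut \<union> phit b a ` carrier Ut)"
    and V: "V \<subseteq> carrier Ut"
    and central: "\<And>a b. a \<in> I \<Longrightarrow> b \<in> I \<Longrightarrow> a \<noteq> b \<Longrightarrow>
      kernel (Gt a b) (Gs (\<pi> a) (\<pi> b)) (alpha a b) \<subseteq> generate (Gt a b) (phit a b ` V \<union> phit b a ` V) \<and>
      generate (Gt a b) (phit a b ` V \<union> phit b a ` V) \<subseteq> group_center (Gt a b)"
  shows "generate Gtil kernel_images \<subseteq> group_center Gtil"
proof (rule H.generate_subgroup_incl[OF _ H.subgroup_group_center])
  have Z: "\<And>a b. a \<in> I \<Longrightarrow> b \<in> I \<Longrightarrow> a \<noteq> b \<Longrightarrow>
      generate (Gt a b) (phit a b ` V \<union> phit b a ` V) \<subseteq> group_center (Gt a b)"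
    using central by blast
  show "kernel_images \<subseteq> group_center Gtil"
  proof
    fix t assume "t \<in> kernel_images"
    then obtain a b x where ab: "a \<in> I" "b \<in> I" "a \<noteq> b"
      and x: "x \<in> kernel (Gt a b) (Gs (\<pi> a) (\<pi> b)) (alpha a b)" and t: "t = taut a b x"
      by blast
    then have "x \<in> generate (Gt a b) (phit a b ` V \<union> phit b a ` V)" using central[OF ab] by blast
    then show "t \<in> group_center Gtil" using tau_image_central[OF gen V Z ab] t by blast
  qed
qed

lemma generate_kernel_images_subset_kernel:
  assumes alphahat: "group_hom Gtil G alphahat" and envelope: "enveloping_group U I Gs phi G tau"
    and alphahat_tau: "\<And>a b x. a \<in> I \<Longrightarrow> b \<in> I \<Longrightarrow> a \<noteq> b \<Longrightarrow> x \<in> carrier (Gt a b) \<Longrightarrow>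
      alphahat (taut a b x) = tau (\<pi> a) (\<pi> b) (alpha a b x)"
  shows "generate Gtil kernel_images \<subseteq> kernel Gtil G alphahat"
proof (rule H.generate_subgroup_incl[OF _ group_hom.subgroup_kernel[OF alphahat]])
  interpret target_envelope: amalgam_envelope U I Gs phi G tau
    using target envelope by unfold_locales
  show "kernel_images \<subseteq> kernel Gtil G alphahat"
  proof
    fix t assume "t \<in> kernel_images"
    then obtain a b x where a: "a \<in> I" and b: "b \<in> I" and ab: "a \<noteq> b"
      and x: "x \<in> kernel (Gt a b) (Gs (\<pi> a) (\<pi> b)) (alpha a b)" and t: "t = taut a b x"
      by blast
    then have "alphahat t = tau (\<pi> a) (\<pi> b) \<one>\<^bsub>Gs (\<pi> a) (\<pi> b)\<^esub>"
      using alphahat_tau[OF a b ab] by (simp add: kernel_def)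
    also have "\<dots> = \<one>\<^bsub>G\<^esub>"
      using group_hom.hom_one[OF target_envelope.tau_group_hom[OF pi_in[OF a] pi_in[OF b] pi_neq[OF a b ab]]] .
    finally show "t \<in> kernel Gtil G alphahat"
      using x t tau_in_carrier[OF a b ab] by (simp add: kernel_def)
  qed
qed

end

theorem mainTheorem1:
  fixes U :: "'u monoid" and Ut :: "'v monoid" and Vt :: "'v set" and I :: "'i set"
    and Gt :: "'i \<Rightarrow> 'i \<Rightarrow> 'gt monoid" and phit :: "'i \<Rightarrow> 'i \<Rightarrow> 'v \<Rightarrow> 'gt"
    and Gs :: "'i \<Rightarrow> 'i \<Rightarrow> 'g monoid" and phi :: "'i \<Rightarrow> 'i \<Rightarrow> 'u \<Rightarrow> 'g"
    and \<pi> :: "'i \<Rightarrow> 'i" and rho :: "'i \<Rightarrow> 'v \<Rightarrow> 'u" and alpha :: "'i \<Rightarrow> 'i \<Rightarrow> 'gt \<Rightarrow> 'g"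
    and Gtil :: "'et monoid" and taut :: "'i \<Rightarrow> 'i \<Rightarrow> 'gt \<Rightarrow> 'et"
    and G :: "'e monoid" and tau :: "'i \<Rightarrow> 'i \<Rightarrow> 'g \<Rightarrow> 'e"
    and alphahat :: "'et \<Rightarrow> 'e"
  assumes groupU: "group U" and groupUt: "group Ut"
    and Vt: "subgroup Vt Ut"
    and At: "U_amalgam Ut I Gt phit"
    and At_gen: "\<And>i j. i \<in> I \<Longrightarrow> j \<in> I \<Longrightarrow> i \<noteq> j \<Longrightarrow>
        carrier (Gt i j) = generate (Gt i j) (phit i j ` carrier Ut \<union> phit j i ` carrier Ut)"
    and A: "U_amalgam U I Gs phi"
    and epi: "amalgam_epi Ut Gt phit U Gs phi I \<pi> rho alpha"
    and univ_t1: "universal_enveloping TYPE('e) Ut I Gt phit Gtil taut"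
    and univ_t2: "universal_enveloping TYPE('et set) Ut I Gt phit Gtil taut"
    and univ1: "universal_enveloping TYPE('e) U I Gs phi G tau"
    and univ2: "universal_enveloping TYPE('et set) U I Gs phi G tau"
    and alphahat: "alphahat \<in> hom Gtil G" "alphahat ` carrier Gtil = carrier G"
    and alphahat_comm: "\<And>i j x. i \<in> I \<Longrightarrow> j \<in> I \<Longrightarrow> i \<noteq> j \<Longrightarrow> x \<in> carrier (Gt i j) \<Longrightarrow>
        alphahat (taut i j x) = tau (\<pi> i) (\<pi> j) (alpha i j x)"
    and central: "\<And>i j. i \<in> I \<Longrightarrow> j \<in> I \<Longrightarrow> i \<noteq> j \<Longrightarrow>
        kernel (Gt i j) (Gs (\<pi> i) (\<pi> j)) (alpha i j)
          \<subseteq> generate (Gt i j) (phit i j ` Vt \<union> phit j i ` Vt) \<and>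
        generate (Gt i j) (phit i j ` Vt \<union> phit j i ` Vt) \<subseteq> group_center (Gt i j)"
  shows "let N = generate Gtil (\<Union>{taut i j ` kernel (Gt i j) (Gs (\<pi> i) (\<pi> j)) (alpha i j)
                                   | i j. i \<in> I \<and> j \<in> I \<and> i \<noteq> j})
         in N \<subseteq> group_center Gtil \<and> N = kernel Gtil G alphahat \<and>
            (\<lambda>C. the_elem (alphahat ` C)) \<in> iso (Gtil Mod N) G"
proof -
  have G_envelope: "enveloping_group U I Gs phi G tau"
    using conjunct1[OF univ1[unfolded universal_enveloping_def]] .
  have Gtil_envelope: "enveloping_group Ut I Gt phit Gtil taut"
    using conjunct1[OF univ_t1[unfolded universal_enveloping_def]] .
  interpret amalgam_epimorphism Ut I Gt phit Gtil taut U Gs phi \<pi> rho alpha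
    by (rule amalgam_epimorphism.intro[OF amalgam_envelope.intro[OF At Gtil_envelope]
          amalgam_epimorphism_axioms.intro[OF A epi]])
  have "group G" using G_envelope unfolding enveloping_group_def by blast
  interpret alphahat: group_hom Gtil G alphahat
    using alphahat(1) \<open>group G\<close> group_H by (simp add: group_hom_def group_hom_axioms_def)
  define N where "N = generate Gtil kernel_images"
  have N_central: "N \<subseteq> group_center Gtil"
    unfolding N_def by (rule generate_kernel_images_central[OF At_gen subgroup.subset[OF Vt] central])
  have "subgroup N Gtil"
    unfolding N_def by (rule H.generate_is_subgroup) (auto simp: kernel_def intro!: tau_in_carrier)
  then have N_normal: "N \<lhd> Gtil" using N_central by (rule H.normal_if_central)
  have "\<And>a b. a \<in> I \<Longrightarrow> b \<in> I \<Longrightarrow> a \<noteq> b \<Longrightarrow>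
      taut a b ` kernel (Gt a b) (Gs (\<pi> a) (\<pi> b)) (alpha a b) \<subseteq> N"
    unfolding N_def by (blast intro: generate.incl)
  then have "kernel Gtil G alphahat \<subseteq> N"
    by (rule kernel_subset_normal[OF N_normal _ univ2 alphahat.group_hom_axioms alphahat_comm])
  moreover have "N \<subseteq> kernel Gtil G alphahat"
    unfolding N_def
    by (rule generate_kernel_images_subset_kernel[OF alphahat.group_hom_axioms G_envelope alphahat_comm])
  ultimately have N_kernel: "N = kernel Gtil G alphahat" by blast
  have "(\<lambda>C. the_elem (alphahat ` C)) \<in> iso (Gtil Mod N) G"
    unfolding N_kernel by (rule alphahat.FactGroup_iso_set[OF alphahat(2)])
  with N_central N_kernel show ?thesis unfolding Let_def N_def by blast
qed
end
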